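(* Let $H$ be either $\mathrm{Sym}(m)$ acting on the set $\Delta$ of $k$-element subsets of $\{1,\ldots,m\}$, where $m\ge 5$ and $1\le k<m/2$, or $\mathrm{P\Gamma L}_d(q)$ acting on the set $\Delta$ of points of the projective space $\mathrm{PG}_{d-1}(q)$, where $d\ge 2$ and $q\ge 4$ is a prime power; let $r=|\Delta|$. Let $\ell\geq 2$ and let $H^\ell$ act coordinatewise on $\Omega=\Delta^\ell$. Suppose $g=(h_1,\ldots,h_\ell)\in H^\ell$ has at most four cycles on $\Omega$. Then, after relabelling the index set $\{1,\ldots,\ell\}$ if necessary, one of the following holds: (i) $\ell=2$, and $h_1$, $h_2$ each have exactly two cycles on $\Delta$, of lengths $t_1,r-t_1$ and $t_2,r-t_2$ respectively, and each of $t_1,r-t_1$ is relatively prime to each of $t_2,r-t_2$; (ii) $\ell=2$, $h_1$ is a single cycle of length $r$ on $\Delta$, $h_2$ has exactly two cycles on $\Delta$, of lengths $t_2,r-t_2$, and $\gcd(r,t_2)\leq 2$; (iii) $\ell=2$, $h_1$ is a single cycle of length $r$ on $\Delta$, $h_2$ has exactly three cycles on $\Delta$, of lengths $t_2,t_2',r-(t_2+t_2')$, and $\gcd(r,t_2)+\gcd(r,t_2')+\gcd(r,t_2+t_2')\leq 4$; (iv) $\ell=3$, $h_1$ is a single cycle of length $r$ on $\Delta$, $h_2$ has exactly two cycles on $\Delta$, of lengths $t_2,r-t_2$, $h_3$ has exactly two cycles on $\Delta$, of lengths $t_3,r-t_3$, and the integers $r,t_2,r-t_2,t_3,r-t_3$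 are pairwise relatively prime; (v) $\ell=2$, $h_1$ is a single cycle of length $r$ on $\Delta$, $h_2$ has exactly four cycles on $\Delta$, of lengths $t_2,t_2',t_2'',r-(t_2+t_2'+t_2'')$, and $\gcd(r,t_2)=\gcd(r,t_2')=\gcd(r,t_2'')=\gcd(r,t_2+t_2'+t_2'')=1$.
   Context: The number of cycles of a permutation is the number of orbits of the cyclic group it generates, fixed points included. The element $(h_1,\ldots,h_\ell)$ acts on $\Omega=\Delta^\ell$ by $(\delta_1,\ldots,\delta_\ell)\mapsto(\delta_1^{h_1},\ldots,\delta_\ell^{h_\ell})$. *)

theory Defs
  imports "HOL-Analysis.Finite_Cartesian_Product" "HOL-Library.FuncSet"
    "HOL-Library.Multiset" "HOL-Combinatorics.Permutations"
begin

definition orbit_of :: "('b \<Rightarrow> 'b) \<Rightarrow> 'b \<Rightarrow> 'b set" where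
  "orbit_of h x = {(h ^^ n) x | n. True}"

text \<open>Number of cycles (orbits of the generated cyclic group, fixed points included)
  of h on the set A.\<close>
definition ncycles :: "('b \<Rightarrow> 'b) \<Rightarrow> 'b set \<Rightarrow> nat" where
  "ncycles h A = card (orbit_of h ` A)"

definition cycle_type :: "('b \<Rightarrow> 'b) \<Rightarrow> 'b set \<Rightarrow> nat multiset" where
  "cycle_type h A = image_mset card (mset_set (orbit_of h ` A))"

definition prod_perm :: "nat \<Rightarrow> (nat \<Rightarrow> 'b \<Rightarrow> 'b) \<Rightarrow> (nat \<Rightarrow> 'b) \<Rightarrow> (nat \<Rightarrow> 'b)" where
  "prod_perm l h x = (\<lambda>i. if i < l then h i (x i) else undefined)"

definition prod_set :: "nat \<Rightarrow> 'b set \<Rightarrow> (nat \<Rightarrow> 'b) set" where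
  "prod_set l \<Delta> = PiE {..<l} (\<lambda>_. \<Delta>)"

definition ksubsets :: "nat \<Rightarrow> nat \<Rightarrow> nat set set" where
  "ksubsets m k = {S. S \<subseteq> {1..m} \<and> card S = k}"

definition SymH :: "nat \<Rightarrow> (nat set \<Rightarrow> nat set) set" where
  "SymH m = {(\<lambda>S. \<sigma> ` S) | \<sigma>. \<sigma> permutes {1..m}}"

definition pg_points :: "('a::field ^ 'n) set set" where
  "pg_points = {{c *s v | c. True} | v. v \<noteq> 0}"

definition field_aut :: "('a::field \<Rightarrow> 'a) \<Rightarrow> bool" where
  "field_aut \<sigma> \<longleftrightarrow> bij \<sigma> \<and> (\<forall>a b. \<sigma> (a + b) = \<sigma> a + \<sigma> b) \<and> (\<forall>a b. \<sigma> (a * b) = \<sigma> a * \<sigma> b)"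

definition semilinear_bij :: "('a::field ^ 'n \<Rightarrow> 'a ^ 'n) \<Rightarrow> bool" where
  "semilinear_bij f \<longleftrightarrow> bij f \<and> (\<forall>x y. f (x + y) = f x + f y) \<and>
     (\<exists>\<sigma>. field_aut \<sigma> \<and> (\<forall>c x. f (c *s x) = \<sigma> c *s f x))"

definition PGammaL :: "(('a::field ^ 'n) set \<Rightarrow> ('a ^ 'n) set) set" where
  "PGammaL = {(\<lambda>P. f ` P) | f. semilinear_bij f}"

definition prop53_concl :: "nat \<Rightarrow> 'b set \<Rightarrow> (nat \<Rightarrow> 'b \<Rightarrow> 'b) \<Rightarrow> bool" where
  "prop53_concl l \<Delta> h \<longleftrightarrow> (\<exists>\<pi>. \<pi> permutes {..<l} \<and>
    (let r = card \<Delta>; c = (\<lambda>i. cycle_type (h (\<pi> i)) \<Delta>) in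
     (l = 2 \<and> (\<exists>t1 t2. c 0 = {#t1, r - t1#} \<and> c 1 = {#t2, r - t2#} \<and>
        coprime t1 t2 \<and> coprime t1 (r - t2) \<and> coprime (r - t1) t2 \<and> coprime (r - t1) (r - t2)))
   \<or> (l = 2 \<and> c 0 = {#r#} \<and> (\<exists>t2. c 1 = {#t2, r - t2#} \<and> gcd r t2 \<le> 2))
   \<or> (l = 2 \<and> c 0 = {#r#} \<and> (\<exists>t t'. c 1 = {#t, t', r - (t + t')#} \<and>
        gcd r t + gcd r t' + gcd r (t + t') \<le> 4))
   \<or> (l = 3 \<and> c 0 = {#r#} \<and> (\<exists>t2 t3. c 1 = {#t2, r - t2#} \<and> c 2 = {#t3, r - t3#} \<and>
        coprime r t2 \<and> coprime r (r - t2) \<and> coprime r t3 \<and> coprime r (r - t3) \<and>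
        coprime t2 (r - t2) \<and> coprime t2 t3 \<and> coprime t2 (r - t3) \<and>
        coprime (r - t2) t3 \<and> coprime (r - t2) (r - t3) \<and> coprime t3 (r - t3)))
   \<or> (l = 2 \<and> c 0 = {#r#} \<and> (\<exists>t t' t''. c 1 = {#t, t', t'', r - (t + t' + t'')#} \<and>
        gcd r t = 1 \<and> gcd r t' = 1 \<and> gcd r t'' = 1 \<and> gcd r (t + t' + t'') = 1))))"

end

theory Submission
  imports Defs
begin

text \<open>
  Only the cycle structure of the \<open>h\<^sub>i\<close> on a set \<open>\<Delta>\<close> of size \<open>r \<ge> 5\<close> matters.
  For cycles \<open>A\<^sub>1, \<dots>, A\<^sub>l\<close> of \<open>h\<^sub>1, \<dots>, h\<^sub>l\<close>, the box \<open>A\<^sub>1 \<times> \<dots> \<times> A\<^sub>l\<close> is a union of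
  cycles of \<open>g\<close>, each of length dividing \<open>lcm |A\<^sub>i|\<close>, so it contains at least
  \<open>\<Prod> |A\<^sub>i| / lcm |A\<^sub>i|\<close> cycles of \<open>g\<close>, and at least one; for two factors this bound is
  \<open>gcd |A\<^sub>1| |A\<^sub>2|\<close>. Summing over all boxes, the numbers \<open>n\<^sub>i\<close> of cycles of the \<open>h\<^sub>i\<close> satisfy
  \<open>\<Prod> n\<^sub>i \<le> 4\<close>, and no two \<open>h\<^sub>i\<close> are \<open>r\<close>-cycles, since their box alone would contain
  \<open>r\<close> cycles. Up to relabelling this leaves the cycle counts \<open>(1, 2)\<close>, \<open>(1, 3)\<close>,
  \<open>(1, 4)\<close>, \<open>(2, 2)\<close> and \<open>(1, 2, 2)\<close>, and in each of them the box bounds are exactly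
  the arithmetic conditions (i)--(v).
\<close>

section \<open>Cycles of a permutation of a finite set\<close>

definition period :: "('b \<Rightarrow> 'b) \<Rightarrow> 'b \<Rightarrow> nat" where
  "period h x = (LEAST p. 0 < p \<and> (h ^^ p) x = x)"

lemma funpow_ne_if_less_period: "0 < q \<Longrightarrow> q < period h x \<Longrightarrow> (h ^^ q) x \<noteq> x"
  unfolding period_def using not_less_Least by blast

lemma orbit_of_self: "x \<in> orbit_of h x"
  unfolding orbit_of_def by (auto intro: exI[of _ 0])

lemma funpow_in_orbit_of: "(h ^^ n) x \<in> orbit_of h x"
  unfolding orbit_of_def by auto

lemma orbit_of_mono:
  assumes "y \<in> orbit_of h x" shows "orbit_of h y \<subseteq> orbit_of h x"
proof
  fix z assume "z \<in> orbit_of h y"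
  then obtain m n where "y = (h ^^ n) x" "z = (h ^^ m) y" using assms unfolding orbit_of_def by auto
  then have "z = (h ^^ (m + n)) x" by (simp add: funpow_add)
  then show "z \<in> orbit_of h x" by (simp add: funpow_in_orbit_of)
qed

locale finite_perm_on =
  fixes h :: "'b \<Rightarrow> 'b" and D :: "'b set"
  assumes finite_carrier: "finite D" and maps_to: "h ` D \<subseteq> D" and inj: "inj_on h D"
begin

lemma funpow_in: "x \<in> D \<Longrightarrow> (h ^^ n) x \<in> D"
  using maps_to by (induction n) auto

lemma orbit_of_subset: "x \<in> D \<Longrightarrow> orbit_of h x \<subseteq> D"
  by (auto simp: orbit_of_def funpow_in)

lemma inj_on_funpow: "inj_on (h ^^ n) D"
proof (induction n)
  case (Suc n)
  have "(h ^^ n) ` D \<subseteq> D" using funpow_in by blast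
  then have "inj_on (h \<circ> (h ^^ n)) D" using Suc inj by (blast intro: comp_inj_on inj_on_subset)
  then show ?case by (simp add: comp_def)
qed simp

lemma funpow_diff_fixed:
  assumes "x \<in> D" "i < j" "(h ^^ i) x = (h ^^ j) x"
  shows "(h ^^ (j - i)) x = x"
proof -
  obtain d where j: "j = i + d" using assms(2) less_imp_add_positive by blast
  have "(h ^^ i) ((h ^^ d) x) = (h ^^ i) x"
    using assms(3) by (simp add: j funpow_add)
  then show ?thesis using inj_on_funpow funpow_in assms(1) j by (auto dest: inj_onD)
qed

lemma funpow_returns:
  assumes x: "x \<in> D"
  shows "\<exists>p>0. (h ^^ p) x = x"
proof -
  have "(\<lambda>n. (h ^^ n) x) ` {..card D} \<subseteq> D" using funpow_in x by blast
  then have "\<not> inj_on (\<lambda>n. (h ^^ n) x) {..card D}"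
    using card_inj_on_le[OF _ _ finite_carrier] by fastforce
  then obtain i j where "i \<noteq> j" "(h ^^ i) x = (h ^^ j) x" unfolding inj_on_def by blast
  then obtain i j where "i < j" "(h ^^ i) x = (h ^^ j) x" by (metis linorder_neqE_nat)
  then show ?thesis using funpow_diff_fixed[OF x] by (intro exI[of _ "j - i"]) auto
qed

lemma period_pos: "x \<in> D \<Longrightarrow> 0 < period h x"
  and funpow_period: "x \<in> D \<Longrightarrow> (h ^^ period h x) x = x"
  using LeastI_ex[OF funpow_returns] unfolding period_def by blast+

lemma funpow_eq_self_iff:
  assumes x: "x \<in> D" shows "(h ^^ n) x = x \<longleftrightarrow> period h x dvd n"
proof
  assume "(h ^^ n) x = x"
  then have "(h ^^ (n mod period h x)) x = x" using funpow_mod_eq[OF funpow_period[OF x]] by simp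
  then show "period h x dvd n"
    using funpow_ne_if_less_period[of "n mod period h x" h x] period_pos[OF x]
    by (auto simp: dvd_eq_mod_eq_0)
next
  assume "period h x dvd n"
  then show "(h ^^ n) x = x" using funpow_mod_eq[OF funpow_period[OF x], of n] by simp
qed

lemma orbit_of_eq_funpow_image:
  assumes "x \<in> D" shows "orbit_of h x = (\<lambda>n. (h ^^ n) x) ` {..<period h x}"
proof -
  have "(h ^^ n) x = (h ^^ (n mod period h x)) x" for n
    using funpow_mod_eq[OF funpow_period[OF assms]] by simp
  then show ?thesis using period_pos[OF assms] unfolding orbit_of_def by force
qed

lemma card_orbit_of:
  assumes x: "x \<in> D" shows "card (orbit_of h x) = period h x"
proof -
  have "inj_on (\<lambda>n. (h ^^ n) x) {0..<period h x}"
    by (rule inj_on_funpow_least[OF funpow_period[OF x] funpow_ne_if_less_period])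
  then show ?thesis by (simp add: orbit_of_eq_funpow_image[OF x] card_image atLeast0LessThan)
qed

lemma orbit_of_sym:
  assumes x: "x \<in> D" and y: "y \<in> orbit_of h x" shows "x \<in> orbit_of h y"
proof -
  obtain k where k: "y = (h ^^ k) x" using y unfolding orbit_of_def by auto
  have "k \<le> period h x * k" using period_pos[OF x] by simp
  then have "(h ^^ (period h x * k - k)) y = (h ^^ (period h x * k - k + k)) x"
    by (simp only: k funpow_add o_apply)
  also have "\<dots> = (h ^^ (period h x * k)) x" using \<open>k \<le> period h x * k\<close> by simp
  also have "\<dots> = x" using funpow_eq_self_iff[OF x] by simp
  finally show ?thesis by (metis funpow_in_orbit_of)
qed

lemma orbit_of_eq: "x \<in> D \<Longrightarrow> y \<in> orbit_of h x \<Longrightarrow> orbit_of h y = orbit_of h x"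
  by (simp add: orbit_of_mono orbit_of_sym subset_antisym)

lemma cycle_subset: "A \<in> orbit_of h ` D \<Longrightarrow> A \<subseteq> D"
  using orbit_of_subset by blast

lemma finite_cycle: "A \<in> orbit_of h ` D \<Longrightarrow> finite A"
  using finite_subset[OF cycle_subset finite_carrier] .

lemma card_cycle_pos: "A \<in> orbit_of h ` D \<Longrightarrow> 0 < card A"
  by (auto simp: card_orbit_of period_pos)

lemma orbit_of_cycle_member: "A \<in> orbit_of h ` D \<Longrightarrow> y \<in> A \<Longrightarrow> orbit_of h y = A"
  using orbit_of_eq by blast

lemma funpow_fixes_cycle:
  assumes A: "A \<in> orbit_of h ` D" and y: "y \<in> A" and dvd: "card A dvd n"
  shows "(h ^^ n) y = y"
proof -
  have yD: "y \<in> D" using A y cycle_subset by blast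
  have "period h y = card A" using card_orbit_of[OF yD] orbit_of_cycle_member[OF A y] by simp
  then show ?thesis using funpow_eq_self_iff[OF yD] dvd by simp
qed

lemma cycles_disjoint:
  assumes "A \<in> orbit_of h ` D" "B \<in> orbit_of h ` D" "A \<noteq> B" shows "A \<inter> B = {}"
  using orbit_of_cycle_member[OF assms(1)] orbit_of_cycle_member[OF assms(2)] assms(3) by blast

lemma finite_cycles: "finite (orbit_of h ` D)"
  using finite_carrier by simp

lemma Union_cycles: "\<Union> (orbit_of h ` D) = D"
  using orbit_of_subset orbit_of_self by fastforce

lemma card_eq_sum_card_cycles: "card D = (\<Sum>A\<in>orbit_of h ` D. card A)"
proof -
  have "pairwise disjnt (orbit_of h ` D)"
    using cycles_disjoint by (auto simp: pairwise_def disjnt_def)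
  then show ?thesis using card_Union_disjoint[of "orbit_of h ` D"] finite_cycle Union_cycles by simp
qed

lemma ncycles_pos: "D \<noteq> {} \<Longrightarrow> 0 < ncycles h D"
  using finite_cycles by (simp add: ncycles_def card_gt_0_iff)

lemma cycles_if_ncycles_eq_1:
  assumes "ncycles h D = 1" shows "orbit_of h ` D = {D}"
proof -
  obtain A where A: "orbit_of h ` D = {A}"
    using assms unfolding ncycles_def by (rule card_1_singletonE)
  then show ?thesis using Union_cycles by auto
qed

end

lemma orbit_of_subset_funpow_image:
  assumes L: "0 < L" and y: "(g ^^ L) y = y"
  shows "orbit_of g y \<subseteq> (\<lambda>n. (g ^^ n) y) ` {..<L}"
proof
  fix z assume "z \<in> orbit_of g y"
  then obtain n where "z = (g ^^ n) y" unfolding orbit_of_def by auto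
  then have "z = (g ^^ (n mod L)) y" using funpow_mod_eq[OF y] by simp
  then show "z \<in> (\<lambda>n. (g ^^ n) y) ` {..<L}" using L by auto
qed

lemma card_le_ncycles_mult:
  assumes B: "finite B" and L: "0 < L" and fixed: "\<And>y. y \<in> B \<Longrightarrow> (g ^^ L) y = y"
  shows "card B \<le> ncycles g B * L"
proof -
  have fin: "finite (orbit_of g y)" and le: "card (orbit_of g y) \<le> L" if "y \<in> B" for y
  proof -
    have sub: "orbit_of g y \<subseteq> (\<lambda>n. (g ^^ n) y) ` {..<L}"
      using orbit_of_subset_funpow_image[OF L fixed[OF that]] .
    show "finite (orbit_of g y)" using finite_surj[OF _ sub] by simp
    show "card (orbit_of g y) \<le> L"
      using le_trans[OF card_mono[OF finite_imageI[OF finite_lessThan] sub]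
          card_image_le[OF finite_lessThan]] by simp
  qed
  have "card B \<le> card (\<Union> (orbit_of g ` B))"
    using B fin orbit_of_self by (intro card_mono) fastforce+
  also have "\<dots> \<le> (\<Sum>C\<in>orbit_of g ` B. card C)"
    using fin by (intro card_Union_le_sum_card)
  also have "\<dots> \<le> ncycles g B * L"
    unfolding ncycles_def using sum_bounded_above[of "orbit_of g ` B" card L] le by auto
  finally show ?thesis .
qed

lemma ncycles_le_of_semiconj:
  assumes fin: "finite \<Omega>" and maps_to: "g ` \<Omega> \<subseteq> \<Omega>" and onto: "F ` \<Omega> = \<Omega>'"
    and semiconj: "\<And>x. x \<in> \<Omega> \<Longrightarrow> F (g x) = g' (F x)"
  shows "ncycles g' \<Omega>' \<le> ncycles g \<Omega>"
proof -
  have funpow: "(g ^^ n) x \<in> \<Omega> \<and> F ((g ^^ n) x) = (g' ^^ n) (F x)" if "x \<in> \<Omega>" for x n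
    using that maps_to semiconj by (induction n) auto
  have "orbit_of g' (F x) = F ` orbit_of g x" if "x \<in> \<Omega>" for x
  proof -
    have "{(g' ^^ n) (F x) | n. True} = {F ((g ^^ n) x) | n. True}" using funpow[OF that] by simp
    then show ?thesis unfolding orbit_of_def by blast
  qed
  then have "orbit_of g' ` \<Omega>' = (\<lambda>X. F ` X) ` (orbit_of g ` \<Omega>)"
    using onto by (auto simp: image_image)
  then show ?thesis using fin by (simp add: ncycles_def card_image_le)
qed

section \<open>Arithmetic of cycle counts and cycle lengths\<close>

lemma gcd_le_if_mult_le_lcm:
  fixes a b c :: nat
  assumes "0 < a" "0 < b" "a * b \<le> c * lcm a b"
  shows "gcd a b \<le> c"
  using assms prod_gcd_lcm_nat[of a b] lcm_pos_nat[of a b] by (metis mult_le_cancel2)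

lemma pairwise_coprime_if_mult_le_lcm:
  fixes a b c :: nat
  assumes pos: "0 < a" "0 < b" "0 < c" and le: "a * b * c \<le> lcm a (lcm b c)"
  shows "coprime a b \<and> coprime a c \<and> coprime b c"
proof -
  have coprime_first: "coprime x y"
    if "0 < x" "0 < y" "0 < z" "x * y * z \<le> lcm x (lcm y z)" for x y z :: nat
  proof -
    have "lcm x (lcm y z) \<le> lcm x y * z"
      using that by (intro dvd_imp_le) (auto simp: lcm_least dvd_mult2 lcm_pos_nat)
    then have "x * y * z \<le> lcm x y * z" using that(4) by linarith
    then have "x * y \<le> 1 * lcm x y" using that(3) by simp
    then have "gcd x y \<le> 1" using gcd_le_if_mult_le_lcm that by blast
    then show ?thesis using that by (simp add: coprime_iff_gcd_eq_1 le_Suc_eq)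
  qed
  show ?thesis
    using coprime_first[of a b c] coprime_first[of a c b] coprime_first[of b c a] pos le
    by (simp_all add: ac_simps lcm.left_commute)
qed

lemma coprime_if_add_eq: "r = a + b \<Longrightarrow> coprime r a \<Longrightarrow> coprime a (b::nat)"
  by (metis coprime_iff_gcd_eq_1 gcd_add2 gcd.commute)

lemma gcd_eq_if_add_eq: "r = a + b \<Longrightarrow> gcd r a = gcd r (b::nat)"
  by (metis gcd_add1 gcd_add2 gcd.commute add.commute)

lemma card_4E:
  assumes "card S = 4"
  obtains a b c d where "S = {a, b, c, d}" "a \<noteq> b" "a \<noteq> c" "a \<noteq> d" "b \<noteq> c" "b \<noteq> d" "c \<noteq> d"
proof -
  obtain a T where "S = insert a T" "a \<notin> T" "card T = 3"
    using assms card_Suc_eq[of S 3] by auto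
  then show ?thesis using that card_3_iff[of T] by auto
qed

lemma two_factor_counts_cases:
  fixes a b :: nat
  assumes "1 \<le> a" "a \<le> b" "a * b \<le> 4" "\<not> (a = 1 \<and> b = 1)"
  obtains "a = 1" "b = 2" | "a = 1" "b = 3" | "a = 1" "b = 4" | "a = 2" "b = 2"
proof -
  have "b \<le> 2" if "2 \<le> a" using mult_le_mono1[OF that, of b] assms(3) by linarith
  moreover have "b \<le> 4" using mult_le_mono1[OF assms(1), of b] assms(3) by linarith
  ultimately show ?thesis using assms that by linarith
qed

lemma two_pow_card_le_prod:
  fixes n :: "'i \<Rightarrow> nat"
  assumes "finite I" and pos: "\<And>i. i \<in> I \<Longrightarrow> 0 < n i"
  shows "2 ^ card {i \<in> I. n i \<noteq> 1} \<le> (\<Prod>i\<in>I. n i)"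
proof -
  let ?T = "{i \<in> I. n i \<noteq> 1}"
  have "2 ^ card ?T = (\<Prod>i\<in>?T. 2::nat)" by simp
  also have "\<dots> \<le> (\<Prod>i\<in>?T. n i)"
  proof (rule prod_mono)
    fix i assume "i \<in> ?T"
    then have "0 < n i" "n i \<noteq> 1" using pos by simp_all
    then show "0 \<le> (2::nat) \<and> 2 \<le> n i" by linarith
  qed
  also have "\<dots> = (\<Prod>i\<in>I. n i)" by (rule prod.mono_neutral_left[OF assms(1)]) auto
  finally show ?thesis .
qed

lemma cycle_counts_cases:
  fixes n :: "nat \<Rightarrow> nat"
  assumes l: "2 \<le> l" and pos: "\<And>i. i < l \<Longrightarrow> 0 < n i"
    and single: "\<And>i j. i < l \<Longrightarrow> j < l \<Longrightarrow> n i = 1 \<Longrightarrow> n j = 1 \<Longrightarrow> i = j"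
    and prod: "(\<Prod>i<l. n i) \<le> 4"
  obtains "l = 2" | s where "l = 3" "s < 3" "n s = 1"
proof -
  let ?T = "{i \<in> {..<l}. n i \<noteq> 1}"
  have "2 ^ card ?T \<le> (2::nat) ^ 2" using two_pow_card_le_prod[of "{..<l}" n] pos prod by fastforce
  then have at_most_2: "card ?T \<le> 2" using power_increasing_iff[of "2::nat" "card ?T" 2] by simp
  show ?thesis
  proof (cases "\<exists>s<l. n s = 1")
    case True
    then obtain s where s: "s < l" "n s = 1" by blast
    have "{..<l} - {s} \<subseteq> ?T"
    proof
      fix i assume "i \<in> {..<l} - {s}"
      then show "i \<in> ?T" using single[of i s] s by auto
    qed
    then have "card ({..<l} - {s}) \<le> card ?T" by (intro card_mono) simp_all
    then have "l - 1 \<le> 2" using s(1) at_most_2 by simp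
    then have "l = 2 \<or> l = 3" using l by linarith
    then show ?thesis using that s by blast
  next
    case False
    then have "?T = {..<l}" by auto
    then show ?thesis using at_most_2 l that by simp
  qed
qed

section \<open>Cycles of the product action\<close>

lemma funpow_prod_perm:
  assumes "y \<in> PiE {..<l} S"
  shows "(prod_perm l h ^^ n) y = (\<lambda>i. if i < l then (h i ^^ n) (y i) else undefined)"
proof (induction n)
  case 0
  show ?case using assms by (auto simp: PiE_def extensional_def)
next
  case (Suc n)
  then show ?case by (auto simp: prod_perm_def)
qed

text \<open>The box \<open>PiE {..<l} A\<close> of a cycle choice \<open>A\<close> is a union of cycles of \<open>prod_perm l h\<close>.\<close>

definition cycle_choices :: "nat \<Rightarrow> (nat \<Rightarrow> 'b \<Rightarrow> 'b) \<Rightarrow> 'b set \<Rightarrow> (nat \<Rightarrow> 'b set) set" where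
  "cycle_choices l h D = PiE {..<l} (\<lambda>i. orbit_of (h i) ` D)"

definition list_choice :: "'c list \<Rightarrow> nat \<Rightarrow> 'c" where
  "list_choice xs = (\<lambda>i\<in>{..<length xs}. xs ! i)"

lemma list_choice_in_PiE: "(\<And>i. i < length xs \<Longrightarrow> xs ! i \<in> F i) \<Longrightarrow> list_choice xs \<in> PiE {..<length xs} F"
  by (simp add: list_choice_def)

lemma list_choice_inject:
  assumes "length xs = length ys" "list_choice xs = list_choice ys" shows "xs = ys"
proof (rule nth_equalityI)
  show "xs ! i = ys ! i" if "i < length xs" for i
    using fun_cong[OF assms(2), of i] assms(1) that by (simp add: list_choice_def)
qed (rule assms(1))

lemma card_PiE_list_choice: "card (PiE {..<length xs} (list_choice xs)) = prod_list (map card xs)"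
  by (simp add: card_PiE list_choice_def prod.list_conv_set_nth atLeast0LessThan)

context
  fixes l :: nat and h :: "nat \<Rightarrow> 'b \<Rightarrow> 'b" and D :: "'b set"
  assumes perms: "\<And>i. i < l \<Longrightarrow> finite_perm_on (h i) D"
begin

lemma finite_prod_set: "finite (prod_set l D)"
  unfolding prod_set_def by (rule finite_PiE) (auto intro: finite_perm_on.finite_carrier[OF perms])

lemma cycle_choice_mem: "A \<in> cycle_choices l h D \<Longrightarrow> i < l \<Longrightarrow> A i \<in> orbit_of (h i) ` D"
  unfolding cycle_choices_def by (auto dest: PiE_mem)

lemma finite_cycle_choices: "finite (cycle_choices l h D)"
  unfolding cycle_choices_def
  by (rule finite_PiE) (auto intro: finite_perm_on.finite_cycles[OF perms])

lemma box_subset_prod_set: "A \<in> cycle_choices l h D \<Longrightarrow> PiE {..<l} A \<subseteq> prod_set l D"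
  unfolding prod_set_def
  by (intro PiE_mono) (simp add: finite_perm_on.cycle_subset[OF perms] cycle_choice_mem)

lemma finite_box: "A \<in> cycle_choices l h D \<Longrightarrow> finite (PiE {..<l} A)"
  using finite_subset[OF box_subset_prod_set finite_prod_set] .

lemma box_nonempty: "A \<in> cycle_choices l h D \<Longrightarrow> PiE {..<l} A \<noteq> {}"
  using cycle_choice_mem orbit_of_self by (fastforce simp: PiE_eq_empty_iff)

lemma orbit_of_prod_perm_subset_box:
  assumes A: "A \<in> cycle_choices l h D" and y: "y \<in> PiE {..<l} A"
  shows "orbit_of (prod_perm l h) y \<subseteq> PiE {..<l} A"
proof
  fix z assume "z \<in> orbit_of (prod_perm l h) y"
  then obtain n where z: "z = (\<lambda>i. if i < l then (h i ^^ n) (y i) else undefined)"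
    unfolding orbit_of_def using funpow_prod_perm[OF y] by auto
  have "(h i ^^ n) (y i) \<in> A i" if i: "i < l" for i
  proof -
    have "orbit_of (h i) (y i) = A i"
      using finite_perm_on.orbit_of_cycle_member[OF perms[OF i] cycle_choice_mem[OF A i]] y i by auto
    then show ?thesis using funpow_in_orbit_of by metis
  qed
  then show "z \<in> PiE {..<l} A" by (simp add: z PiE_iff extensional_def)
qed

lemma ncycles_box_pos: "A \<in> cycle_choices l h D \<Longrightarrow> 0 < ncycles (prod_perm l h) (PiE {..<l} A)"
  using finite_box box_nonempty by (simp add: ncycles_def card_gt_0_iff)

lemma card_box_le:
  assumes A: "A \<in> cycle_choices l h D" and L: "0 < L" and dvd: "\<And>i. i < l \<Longrightarrow> card (A i) dvd L"
  shows "card (PiE {..<l} A) \<le> ncycles (prod_perm l h) (PiE {..<l} A) * L"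
proof (rule card_le_ncycles_mult[OF finite_box[OF A] L])
  fix y assume y: "y \<in> PiE {..<l} A"
  have "(h i ^^ L) (y i) = y i" if i: "i < l" for i
    using finite_perm_on.funpow_fixes_cycle[OF perms[OF i] cycle_choice_mem[OF A i] _ dvd[OF i]] y i
    by auto
  then show "(prod_perm l h ^^ L) y = y"
    using y by (auto simp: funpow_prod_perm[OF y] PiE_iff extensional_def)
qed

lemma boxes_disjoint:
  assumes A: "A \<in> cycle_choices l h D" and B: "B \<in> cycle_choices l h D" and ne: "A \<noteq> B"
  shows "PiE {..<l} A \<inter> PiE {..<l} B = {}"
proof -
  have "\<exists>i<l. A i \<noteq> B i"
  proof (rule ccontr)
    assume "\<not> (\<exists>i<l. A i \<noteq> B i)"
    then have "A = B"
      by (intro PiE_ext[OF A[unfolded cycle_choices_def] B[unfolded cycle_choices_def]]) auto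
    then show False using ne by contradiction
  qed
  then obtain i where i: "i < l" "A i \<noteq> B i" by blast
  have "A i \<inter> B i = {}"
    by (rule finite_perm_on.cycles_disjoint[OF perms[OF i(1)] cycle_choice_mem[OF A i(1)]
          cycle_choice_mem[OF B i(1)] i(2)])
  then show ?thesis using PiE_mem[of _ "{..<l}" A i] PiE_mem[of _ "{..<l}" B i] i(1) by blast
qed

lemma box_orbits_disjoint:
  assumes A: "A \<in> cycle_choices l h D" and B: "B \<in> cycle_choices l h D" and ne: "A \<noteq> B"
  shows "orbit_of (prod_perm l h) ` PiE {..<l} A \<inter> orbit_of (prod_perm l h) ` PiE {..<l} B = {}"
proof -
  have False if y: "y \<in> PiE {..<l} A" and z: "z \<in> PiE {..<l} B"
    and eq: "orbit_of (prod_perm l h) y = orbit_of (prod_perm l h) z" for y z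
  proof -
    have "z \<in> PiE {..<l} A"
      using orbit_of_prod_perm_subset_box[OF A y] orbit_of_self[of z] eq by blast
    then show False using boxes_disjoint[OF A B ne] z by blast
  qed
  then show ?thesis by blast
qed

lemma sum_ncycles_boxes_le:
  assumes I: "finite I" "inj_on \<beta> I" "\<beta> ` I \<subseteq> cycle_choices l h D"
  shows "(\<Sum>j\<in>I. ncycles (prod_perm l h) (PiE {..<l} (\<beta> j))) \<le> ncycles (prod_perm l h) (prod_set l D)"
proof -
  let ?cycles = "\<lambda>j. orbit_of (prod_perm l h) ` PiE {..<l} (\<beta> j)"
  have "(\<Sum>j\<in>I. ncycles (prod_perm l h) (PiE {..<l} (\<beta> j))) = card (\<Union>j\<in>I. ?cycles j)"
    unfolding ncycles_def
  proof (rule card_UN_disjoint[symmetric])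
    show "\<forall>j\<in>I. finite (?cycles j)" using finite_box I(3) by blast
    show "\<forall>j\<in>I. \<forall>k\<in>I. j \<noteq> k \<longrightarrow> ?cycles j \<inter> ?cycles k = {}"
    proof (intro ballI impI)
      fix j k assume jk: "j \<in> I" "k \<in> I" "j \<noteq> k"
      then have "\<beta> j \<noteq> \<beta> k" using inj_onD[OF I(2)] by blast
      moreover have "\<beta> j \<in> cycle_choices l h D" "\<beta> k \<in> cycle_choices l h D" using I(3) jk by auto
      ultimately show "?cycles j \<inter> ?cycles k = {}" using box_orbits_disjoint by blast
    qed
  qed (rule I(1))
  also have "\<dots> \<le> ncycles (prod_perm l h) (prod_set l D)"
    unfolding ncycles_def using box_subset_prod_set I(3)
    by (intro card_mono finite_imageI finite_prod_set) blast
  finally show ?thesis .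
qed

lemma prod_ncycles_le: "(\<Prod>i<l. ncycles (h i) D) \<le> ncycles (prod_perm l h) (prod_set l D)"
proof -
  have "(\<Prod>i<l. ncycles (h i) D) = (\<Sum>A\<in>cycle_choices l h D. 1)"
    by (simp add: cycle_choices_def card_PiE ncycles_def)
  also have "\<dots> \<le> (\<Sum>A\<in>cycle_choices l h D. ncycles (prod_perm l h) (PiE {..<l} A))"
    using ncycles_box_pos by (intro sum_mono) (simp add: Suc_le_eq)
  also have "\<dots> \<le> ncycles (prod_perm l h) (prod_set l D)"
    using sum_ncycles_boxes_le[of "cycle_choices l h D" id] finite_cycle_choices by simp
  finally show ?thesis .
qed

lemma card_le_ncycles_if_two_transitive:
  assumes ij: "i < l" "j < l" "i \<noteq> j" and trans: "ncycles (h i) D = 1" "ncycles (h j) D = 1"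
    and x: "x \<in> D"
  shows "card D \<le> ncycles (prod_perm l h) (prod_set l D)"
proof -
  define A where "A = (\<lambda>k\<in>{..<l}. orbit_of (h k) x)"
  have A: "A \<in> cycle_choices l h D" using x by (simp add: A_def cycle_choices_def)
  have "A i = D" "A j = D"
    using finite_perm_on.cycles_if_ncycles_eq_1[OF perms] trans ij x by (auto simp: A_def)
  define L where "L = (\<Prod>k\<in>{..<l} - {j}. card (A k))"
  have "0 < L"
    unfolding L_def using finite_perm_on.card_cycle_pos[OF perms cycle_choice_mem[OF A]] by simp
  moreover have "card (A k) dvd L" if k: "k < l" for k
  proof (cases "k = j")
    case True
    then have "card (A k) = card (A i)" using \<open>A i = D\<close> \<open>A j = D\<close> by simp
    then show ?thesis unfolding L_def using ij dvd_prodI[of "{..<l} - {j}" i "\<lambda>k. card (A k)"] by simp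
  next
    case False
    then show ?thesis unfolding L_def using k dvd_prodI[of "{..<l} - {j}" k "\<lambda>k. card (A k)"] by simp
  qed
  ultimately have "card (PiE {..<l} A) \<le> ncycles (prod_perm l h) (PiE {..<l} A) * L"
    by (rule card_box_le[OF A])
  moreover have "card (PiE {..<l} A) = card D * L"
    unfolding L_def using ij \<open>A j = D\<close> by (simp add: card_PiE prod.remove[of _ j])
  ultimately have "card D \<le> ncycles (prod_perm l h) (PiE {..<l} A)"
    using \<open>0 < L\<close> by simp
  also have "\<dots> \<le> ncycles (prod_perm l h) (prod_set l D)"
    using sum_ncycles_boxes_le[of "{A}" id] A by simp
  finally show ?thesis .
qed

lemma finite_perm_on_reindex:
  assumes "\<pi> permutes {..<l}" "i < l" shows "finite_perm_on (h (\<pi> i)) D"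
  using perms permutes_in_image[OF assms(1), of i] assms(2) by simp

lemma ncycles_prod_perm_reindex:
  assumes \<pi>: "\<pi> permutes {..<l}"
  shows "ncycles (prod_perm l (\<lambda>i. h (\<pi> i))) (prod_set l D) \<le> ncycles (prod_perm l h) (prod_set l D)"
proof (rule ncycles_le_of_semiconj[OF finite_prod_set])
  let ?F = "\<lambda>x. \<lambda>i\<in>{..<l}. x (\<pi> i)"
  have \<pi>_less: "\<pi> i < l" "inv \<pi> i < l" if "i < l" for i
    using permutes_in_image[OF \<pi>] permutes_in_image[OF permutes_inv[OF \<pi>]] that by auto
  show "prod_perm l h ` prod_set l D \<subseteq> prod_set l D"
    using finite_perm_on.maps_to[OF perms]
    by (auto simp: prod_set_def prod_perm_def PiE_iff extensional_def image_subset_iff)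
  show "?F ` prod_set l D = prod_set l D"
  proof
    show "?F ` prod_set l D \<subseteq> prod_set l D" using \<pi>_less by (auto simp: prod_set_def)
    show "prod_set l D \<subseteq> ?F ` prod_set l D"
    proof
      fix y assume y: "y \<in> prod_set l D"
      have "?F (\<lambda>i\<in>{..<l}. y (inv \<pi> i)) i = y i" for i
        using y permutes_inverses(2)[OF \<pi>] \<pi>_less
        by (cases "i < l") (auto simp: prod_set_def PiE_iff extensional_def)
      then have "?F (\<lambda>i\<in>{..<l}. y (inv \<pi> i)) = y" ..
      moreover have "(\<lambda>i\<in>{..<l}. y (inv \<pi> i)) \<in> prod_set l D"
        using y \<pi>_less by (auto simp: prod_set_def)
      ultimately show "y \<in> ?F ` prod_set l D" by (metis image_eqI)
    qed
  qed
  show "?F (prod_perm l h x) = prod_perm l (\<lambda>i. h (\<pi> i)) (?F x)" for x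
    using \<pi>_less by (auto simp: prod_perm_def)
qed

lemma list_choice_mem_cycle_choices:
  assumes "length xs = l" "\<And>i. i < l \<Longrightarrow> xs ! i \<in> orbit_of (h i) ` D"
  shows "list_choice xs \<in> cycle_choices l h D"
  using list_choice_in_PiE[of xs "\<lambda>i. orbit_of (h i) ` D"] assms by (simp add: cycle_choices_def)

lemma prod_card_le_ncycles_list_box:
  assumes len: "length xs = l" and xs: "\<And>i. i < l \<Longrightarrow> xs ! i \<in> orbit_of (h i) ` D"
  shows "prod_list (map card xs)
    \<le> ncycles (prod_perm l h) (PiE {..<l} (list_choice xs)) * Lcm (set (map card xs))"
proof -
  have pos: "0 < card (xs ! i)" if "i < l" for i
    using finite_perm_on.card_cycle_pos[OF perms[OF that] xs[OF that]] .
  have "0 \<notin> set (map card xs)" using pos len by (fastforce simp: in_set_conv_nth)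
  then have "0 < Lcm (set (map card xs))"
    using Lcm_0_iff_nat[of "set (map card xs)"] by (intro gr0I) (simp del: set_map)
  moreover have "card (list_choice xs i) dvd Lcm (set (map card xs))" if "i < l" for i
    using that len by (simp add: list_choice_def dvd_Lcm)
  ultimately show ?thesis
    using card_box_le[OF list_choice_mem_cycle_choices[OF len xs]] card_PiE_list_choice[of xs] len
    by simp
qed

end

context
  fixes h :: "nat \<Rightarrow> 'b \<Rightarrow> 'b" and D :: "'b set"
  assumes perms: "\<And>i. i < 2 \<Longrightarrow> finite_perm_on (h i) D"
begin

lemma gcd_card_le_ncycles_box2:
  assumes a: "a \<in> orbit_of (h 0) ` D" and b: "b \<in> orbit_of (h 1) ` D"
  shows "gcd (card a) (card b) \<le> ncycles (prod_perm 2 h) (PiE {..<2} (list_choice [a, b]))"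
proof -
  have "[a, b] ! i \<in> orbit_of (h i) ` D" if "i < 2" for i
    using a b that by (auto simp: less_2_cases_iff)
  then have "card a * card b \<le> ncycles (prod_perm 2 h) (PiE {..<2} (list_choice [a, b])) * lcm (card a) (card b)"
    using prod_card_le_ncycles_list_box[of 2 h D "[a, b]", OF perms] by simp
  moreover have "0 < card a" "0 < card b"
    using finite_perm_on.card_cycle_pos[OF perms[of 0] a] finite_perm_on.card_cycle_pos[OF perms[of 1] b]
    by simp_all
  ultimately show ?thesis by (intro gcd_le_if_mult_le_lcm) (simp_all add: mult.commute)
qed

lemma sum_gcd_card_cycles_le:
  "(\<Sum>a\<in>orbit_of (h 0) ` D. \<Sum>b\<in>orbit_of (h 1) ` D. gcd (card a) (card b))
    \<le> ncycles (prod_perm 2 h) (prod_set 2 D)"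
proof -
  let ?I = "orbit_of (h 0) ` D \<times> orbit_of (h 1) ` D" and ?\<beta> = "\<lambda>(a, b). list_choice [a, b]"
  have "(\<Sum>a\<in>orbit_of (h 0) ` D. \<Sum>b\<in>orbit_of (h 1) ` D. gcd (card a) (card b))
      \<le> (\<Sum>(a, b)\<in>?I. ncycles (prod_perm 2 h) (PiE {..<2} (list_choice [a, b])))"
    unfolding sum.cartesian_product using gcd_card_le_ncycles_box2 by (intro sum_mono) auto
  also have "\<dots> \<le> ncycles (prod_perm 2 h) (prod_set 2 D)"
  proof -
    have "finite ?I" using finite_perm_on.finite_cycles[OF perms] by simp
    moreover have "inj_on ?\<beta> ?I"
    proof (rule inj_onI)
      fix p q assume "?\<beta> p = ?\<beta> q"
      then have "[fst p, snd p] = [fst q, snd q]"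
        by (intro list_choice_inject) (auto simp: case_prod_beta)
      then show "p = q" by (simp add: prod_eq_iff)
    qed
    moreover have "?\<beta> ` ?I \<subseteq> cycle_choices 2 h D"
    proof (rule image_subsetI)
      fix p assume "p \<in> ?I"
      then have "[fst p, snd p] ! i \<in> orbit_of (h i) ` D" if "i < 2" for i
        using that by (auto simp: less_2_cases_iff)
      then show "?\<beta> p \<in> cycle_choices 2 h D"
        using list_choice_mem_cycle_choices[of 2 h D, OF perms] by (simp add: case_prod_beta)
    qed
    ultimately show ?thesis using sum_ncycles_boxes_le[of 2 h D ?I ?\<beta>, OF perms] by (simp add: case_prod_beta)
  qed
  finally show ?thesis .
qed

end

section \<open>The case analysis\<close>

text \<open>The conclusion of the proposition for the given order of the coordinates.\<close>

definition prop53_cases :: "nat \<Rightarrow> 'b set \<Rightarrow> (nat \<Rightarrow> 'b \<Rightarrow> 'b) \<Rightarrow> bool" where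
  "prop53_cases l \<Delta> h \<longleftrightarrow>
    (let r = card \<Delta>; c = (\<lambda>i. cycle_type (h i) \<Delta>) in
     (l = 2 \<and> (\<exists>t1 t2. c 0 = {#t1, r - t1#} \<and> c 1 = {#t2, r - t2#} \<and>
        coprime t1 t2 \<and> coprime t1 (r - t2) \<and> coprime (r - t1) t2 \<and> coprime (r - t1) (r - t2)))
   \<or> (l = 2 \<and> c 0 = {#r#} \<and> (\<exists>t2. c 1 = {#t2, r - t2#} \<and> gcd r t2 \<le> 2))
   \<or> (l = 2 \<and> c 0 = {#r#} \<and> (\<exists>t t'. c 1 = {#t, t', r - (t + t')#} \<and>
        gcd r t + gcd r t' + gcd r (t + t') \<le> 4))
   \<or> (l = 3 \<and> c 0 = {#r#} \<and> (\<exists>t2 t3. c 1 = {#t2, r - t2#} \<and> c 2 = {#t3, r - t3#} \<and>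
        coprime r t2 \<and> coprime r (r - t2) \<and> coprime r t3 \<and> coprime r (r - t3) \<and>
        coprime t2 (r - t2) \<and> coprime t2 t3 \<and> coprime t2 (r - t3) \<and>
        coprime (r - t2) t3 \<and> coprime (r - t2) (r - t3) \<and> coprime t3 (r - t3)))
   \<or> (l = 2 \<and> c 0 = {#r#} \<and> (\<exists>t t' t''. c 1 = {#t, t', t'', r - (t + t' + t'')#} \<and>
        gcd r t = 1 \<and> gcd r t' = 1 \<and> gcd r t'' = 1 \<and> gcd r (t + t' + t'') = 1)))"

lemma prop53_concl_iff:
  "prop53_concl l \<Delta> h \<longleftrightarrow> (\<exists>\<pi>. \<pi> permutes {..<l} \<and> prop53_cases l \<Delta> (\<lambda>i. h (\<pi> i)))"
  unfolding prop53_concl_def prop53_cases_def by simp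

lemma prop53_cases_i:
  assumes "cycle_type (h 0) \<Delta> = {#t1, card \<Delta> - t1#}" "cycle_type (h 1) \<Delta> = {#t2, card \<Delta> - t2#}"
    "coprime t1 t2" "coprime t1 (card \<Delta> - t2)" "coprime (card \<Delta> - t1) t2"
    "coprime (card \<Delta> - t1) (card \<Delta> - t2)"
  shows "prop53_cases 2 \<Delta> h"
  using assms unfolding prop53_cases_def Let_def by blast

lemma prop53_cases_ii:
  assumes "cycle_type (h 0) \<Delta> = {#card \<Delta>#}" "cycle_type (h 1) \<Delta> = {#t, card \<Delta> - t#}"
    "gcd (card \<Delta>) t \<le> 2"
  shows "prop53_cases 2 \<Delta> h"
  using assms unfolding prop53_cases_def Let_def by blast

lemma prop53_cases_iii:
  assumes "cycle_type (h 0) \<Delta> = {#card \<Delta>#}" "cycle_type (h 1) \<Delta> = {#t, t', card \<Delta> - (t + t')#}"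
    "gcd (card \<Delta>) t + gcd (card \<Delta>) t' + gcd (card \<Delta>) (t + t') \<le> 4"
  shows "prop53_cases 2 \<Delta> h"
  using assms unfolding prop53_cases_def Let_def by blast

lemma prop53_cases_iv:
  assumes "cycle_type (h 0) \<Delta> = {#card \<Delta>#}"
    "cycle_type (h 1) \<Delta> = {#t2, card \<Delta> - t2#}" "cycle_type (h 2) \<Delta> = {#t3, card \<Delta> - t3#}"
    "coprime (card \<Delta>) t2" "coprime (card \<Delta>) (card \<Delta> - t2)" "coprime (card \<Delta>) t3"
    "coprime (card \<Delta>) (card \<Delta> - t3)" "coprime t2 (card \<Delta> - t2)" "coprime t2 t3"
    "coprime t2 (card \<Delta> - t3)" "coprime (card \<Delta> - t2) t3" "coprime (card \<Delta> - t2) (card \<Delta> - t3)"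
    "coprime t3 (card \<Delta> - t3)"
  shows "prop53_cases 3 \<Delta> h"
  unfolding prop53_cases_def Let_def
  by (rule disjI2, rule disjI2, rule disjI2, rule disjI1) (intro conjI exI[of _ t2] exI[of _ t3] refl assms)

lemma prop53_cases_v:
  assumes "cycle_type (h 0) \<Delta> = {#card \<Delta>#}"
    "cycle_type (h 1) \<Delta> = {#t, t', t'', card \<Delta> - (t + t' + t'')#}"
    "gcd (card \<Delta>) t = 1" "gcd (card \<Delta>) t' = 1" "gcd (card \<Delta>) t'' = 1"
    "gcd (card \<Delta>) (t + t' + t'') = 1"
  shows "prop53_cases 2 \<Delta> h"
  unfolding prop53_cases_def Let_def
  by (rule disjI2, rule disjI2, rule disjI2, rule disjI2)
    (intro conjI exI[of _ t] exI[of _ t'] exI[of _ t''] refl assms)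

context
  fixes h :: "nat \<Rightarrow> 'b \<Rightarrow> 'b" and D :: "'b set"
  assumes perms: "\<And>i. i < 2 \<Longrightarrow> finite_perm_on (h i) D"
    and few: "ncycles (prod_perm 2 h) (prod_set 2 D) \<le> 4"
begin

lemma sum_gcd_card_le_4_if_first_transitive:
  assumes "orbit_of (h 0) ` D = {D}"
  shows "(\<Sum>b\<in>orbit_of (h 1) ` D. gcd (card D) (card b)) \<le> 4"
  using sum_gcd_card_cycles_le[of h D, OF perms] few assms by simp

lemma prop53_cases_cycle_counts_1_2:
  assumes "ncycles (h 0) D = 1" "ncycles (h 1) D = 2"
  shows "prop53_cases 2 D h"
proof -
  have O0: "orbit_of (h 0) ` D = {D}"
    using finite_perm_on.cycles_if_ncycles_eq_1[OF perms[of 0]] assms(1) by simp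
  obtain a b where O1: "orbit_of (h 1) ` D = {a, b}" "a \<noteq> b"
    using assms(2) unfolding ncycles_def card_2_iff by blast
  have r: "card D = card a + card b"
    using finite_perm_on.card_eq_sum_card_cycles[OF perms[of 1]] O1 by simp
  have "gcd (card D) (card a) + gcd (card D) (card b) \<le> 4"
    using sum_gcd_card_le_4_if_first_transitive[OF O0] O1 by simp
  then have "gcd (card D) (card a) \<le> 2" using gcd_eq_if_add_eq[OF r] by simp
  moreover have "cycle_type (h 0) D = {#card D#}" "cycle_type (h 1) D = {#card a, card D - card a#}"
    using O0 O1 r by (simp_all add: cycle_type_def)
  ultimately show ?thesis by (intro prop53_cases_ii)
qed

lemma prop53_cases_cycle_counts_1_3:
  assumes "ncycles (h 0) D = 1" "ncycles (h 1) D = 3"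
  shows "prop53_cases 2 D h"
proof -
  have O0: "orbit_of (h 0) ` D = {D}"
    using finite_perm_on.cycles_if_ncycles_eq_1[OF perms[of 0]] assms(1) by simp
  obtain a b c where O1: "orbit_of (h 1) ` D = {a, b, c}" "a \<noteq> b" "b \<noteq> c" "a \<noteq> c"
    using assms(2) card_3_iff[of "orbit_of (h 1) ` D"] unfolding ncycles_def by metis
  have r: "card D = card a + card b + card c"
    using finite_perm_on.card_eq_sum_card_cycles[OF perms[of 1]] O1 by simp
  have "gcd (card D) (card a) + gcd (card D) (card b) + gcd (card D) (card c) \<le> 4"
    using sum_gcd_card_le_4_if_first_transitive[OF O0] O1 by simp
  then have "gcd (card D) (card a) + gcd (card D) (card b) + gcd (card D) (card a + card b) \<le> 4"
    using gcd_eq_if_add_eq[OF r] by simp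
  moreover have "cycle_type (h 0) D = {#card D#}"
    "cycle_type (h 1) D = {#card a, card b, card D - (card a + card b)#}"
    using O0 O1 r by (simp_all add: cycle_type_def)
  ultimately show ?thesis by (intro prop53_cases_iii)
qed

lemma prop53_cases_cycle_counts_1_4:
  assumes "ncycles (h 0) D = 1" "ncycles (h 1) D = 4"
  shows "prop53_cases 2 D h"
proof -
  have O0: "orbit_of (h 0) ` D = {D}"
    using finite_perm_on.cycles_if_ncycles_eq_1[OF perms[of 0]] assms(1) by simp
  obtain a b c d where O1: "orbit_of (h 1) ` D = {a, b, c, d}"
    and distinct: "a \<noteq> b" "a \<noteq> c" "a \<noteq> d" "b \<noteq> c" "b \<noteq> d" "c \<noteq> d"
    using assms(2) unfolding ncycles_def by (rule card_4E)
  have r: "card D = card a + card b + card c + card d"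
    using finite_perm_on.card_eq_sum_card_cycles[OF perms[of 1]] O1 distinct by simp
  then have "0 < card D" using finite_perm_on.card_cycle_pos[OF perms[of 1]] O1 by simp
  then have pos: "1 \<le> gcd (card D) (card x)" for x by (simp add: Suc_le_eq)
  have "gcd (card D) (card a) + gcd (card D) (card b) + gcd (card D) (card c)
      + gcd (card D) (card d) \<le> 4"
    using sum_gcd_card_le_4_if_first_transitive[OF O0] O1 distinct by simp
  then have "gcd (card D) (card a) = 1" "gcd (card D) (card b) = 1" "gcd (card D) (card c) = 1"
    "gcd (card D) (card a + card b + card c) = 1"
    using gcd_eq_if_add_eq[OF r] pos[of a] pos[of b] pos[of c] pos[of d] by linarith+
  moreover have "cycle_type (h 0) D = {#card D#}"
    "cycle_type (h 1) D = {#card a, card b, card c, card D - (card a + card b + card c)#}"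
    using O0 O1 r distinct by (simp_all add: cycle_type_def)
  ultimately show ?thesis by (intro prop53_cases_v)
qed

lemma prop53_cases_cycle_counts_2_2:
  assumes "ncycles (h 0) D = 2" "ncycles (h 1) D = 2"
  shows "prop53_cases 2 D h"
proof -
  obtain a b where O0: "orbit_of (h 0) ` D = {a, b}" "a \<noteq> b"
    using assms(1) unfolding ncycles_def card_2_iff by blast
  obtain c d where O1: "orbit_of (h 1) ` D = {c, d}" "c \<noteq> d"
    using assms(2) unfolding ncycles_def card_2_iff by blast
  have r: "card D = card a + card b" "card D = card c + card d"
    using finite_perm_on.card_eq_sum_card_cycles[OF perms[of 0]]
      finite_perm_on.card_eq_sum_card_cycles[OF perms[of 1]] O0 O1 by simp_all
  have "0 < card a" "0 < card b"
    using finite_perm_on.card_cycle_pos[OF perms[of 0]] O0 by simp_all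
  then have pos: "1 \<le> gcd (card a) (card y)" "1 \<le> gcd (card b) (card y)" for y
    by (simp_all add: Suc_le_eq)
  have "gcd (card a) (card c) + gcd (card a) (card d) + (gcd (card b) (card c) + gcd (card b) (card d)) \<le> 4"
    using sum_gcd_card_cycles_le[of h D, OF perms] few O0 O1 by simp
  then have "coprime (card a) (card c)" "coprime (card a) (card d)"
    "coprime (card b) (card c)" "coprime (card b) (card d)"
    unfolding coprime_iff_gcd_eq_1 using pos[of c] pos[of d] by linarith+
  moreover have e: "card D - card a = card b" "card D - card c = card d" using r by simp_all
  moreover have "cycle_type (h 0) D = {#card a, card b#}" "cycle_type (h 1) D = {#card c, card d#}"
    using O0 O1 by (simp_all add: cycle_type_def)
  ultimately show ?thesis using prop53_cases_i[of h D "card a" "card c", unfolded e] by blast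
qed

lemma prop53_cases_two_factors:
  assumes big: "4 < card D" and le: "ncycles (h 0) D \<le> ncycles (h 1) D"
  shows "prop53_cases 2 D h"
proof -
  let ?n = "\<lambda>i. ncycles (h i) D"
  obtain x where x: "x \<in> D" using big by fastforce
  have "?n 0 * ?n 1 \<le> 4"
    using prod_ncycles_le[of 2 h D, OF perms] few by (simp add: numeral_2_eq_2)
  moreover have "1 \<le> ?n 0"
    using finite_perm_on.ncycles_pos[OF perms[of 0]] x by (auto simp: Suc_le_eq)
  moreover have "\<not> (?n 0 = 1 \<and> ?n 1 = 1)"
    using card_le_ncycles_if_two_transitive[of 2 h D 0 1, OF perms _ _ _ _ _ x] few big by auto
  ultimately consider "?n 0 = 1" "?n 1 = 2" | "?n 0 = 1" "?n 1 = 3" | "?n 0 = 1" "?n 1 = 4"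
    | "?n 0 = 2" "?n 1 = 2"
    using two_factor_counts_cases le by blast
  then show ?thesis
    by cases (auto intro: prop53_cases_cycle_counts_1_2 prop53_cases_cycle_counts_1_3
        prop53_cases_cycle_counts_1_4 prop53_cases_cycle_counts_2_2)
qed

end

context
  fixes h :: "nat \<Rightarrow> 'b \<Rightarrow> 'b" and D :: "'b set"
  assumes perms: "\<And>i. i < 3 \<Longrightarrow> finite_perm_on (h i) D"
    and few: "ncycles (prod_perm 3 h) (prod_set 3 D) \<le> 4"
    and transitive: "orbit_of (h 0) ` D = {D}"
begin

lemma list_choice3_mem_cycle_choices:
  assumes "b \<in> orbit_of (h 1) ` D" "c \<in> orbit_of (h 2) ` D"
  shows "list_choice [D, b, c] \<in> cycle_choices 3 h D"
proof (rule list_choice_mem_cycle_choices[of 3 h D, OF perms])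
  show "[D, b, c] ! i \<in> orbit_of (h i) ` D" if "i < 3" for i
  proof -
    have "i = 0 \<or> i = 1 \<or> i = 2" using that by linarith
    then show ?thesis using assms transitive by (elim disjE) simp_all
  qed
  show "length [D, b, c] = 3" by simp
qed

lemma sum_ncycles_boxes3_le:
  "(\<Sum>(b, c)\<in>orbit_of (h 1) ` D \<times> orbit_of (h 2) ` D.
      ncycles (prod_perm 3 h) (PiE {..<3} (list_choice [D, b, c]))) \<le> 4"
proof -
  let ?I = "orbit_of (h 1) ` D \<times> orbit_of (h 2) ` D" and ?\<beta> = "\<lambda>(b, c). list_choice [D, b, c]"
  have "finite ?I" using finite_perm_on.finite_cycles[OF perms] by simp
  moreover have "inj_on ?\<beta> ?I"
  proof (rule inj_onI)
    fix p q assume "?\<beta> p = ?\<beta> q"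
    then have "[D, fst p, snd p] = [D, fst q, snd q]"
      by (intro list_choice_inject) (auto simp: case_prod_beta)
    then show "p = q" by (simp add: prod_eq_iff)
  qed
  moreover have "?\<beta> ` ?I \<subseteq> cycle_choices 3 h D"
    using list_choice3_mem_cycle_choices by auto
  ultimately show ?thesis
    using sum_ncycles_boxes_le[of 3 h D ?I ?\<beta>, OF perms] few by (simp add: case_prod_beta)
qed

lemma pairwise_coprime_if_ncycles_box3_le_1:
  assumes b: "b \<in> orbit_of (h 1) ` D" and c: "c \<in> orbit_of (h 2) ` D"
    and one: "ncycles (prod_perm 3 h) (PiE {..<3} (list_choice [D, b, c])) \<le> 1"
  shows "coprime (card D) (card b) \<and> coprime (card D) (card c) \<and> coprime (card b) (card c)"
proof (rule pairwise_coprime_if_mult_le_lcm)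
  have mem: "[D, b, c] ! i \<in> orbit_of (h i) ` D" if "i < 3" for i
  proof -
    have "i = 0 \<or> i = 1 \<or> i = 2" using that by linarith
    then show ?thesis using b c transitive by (elim disjE) simp_all
  qed
  have pos: "0 < card ([D, b, c] ! i)" if "i < 3" for i
    using finite_perm_on.card_cycle_pos[OF perms[OF that] mem[OF that]] .
  show "0 < card D" "0 < card b" "0 < card c"
    using pos[of 0] pos[of 1] pos[of 2] by (simp_all add: numeral_2_eq_2)
  have "card D * card b * card c
      \<le> ncycles (prod_perm 3 h) (PiE {..<3} (list_choice [D, b, c])) * lcm (card D) (lcm (card b) (card c))"
    using prod_card_le_ncycles_list_box[of 3 h D "[D, b, c]", OF perms _ mem] by (simp add: ac_simps)
  also have "\<dots> \<le> lcm (card D) (lcm (card b) (card c))" using one by simp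
  finally show "card D * card b * card c \<le> lcm (card D) (lcm (card b) (card c))" .
qed

lemma ncycles_eq_2_if_first_transitive:
  assumes big: "4 < card D"
  shows "ncycles (h 1) D = 2 \<and> ncycles (h 2) D = 2"
proof -
  let ?n = "\<lambda>i. ncycles (h i) D"
  obtain x where x: "x \<in> D" using big by fastforce
  have n0: "?n 0 = 1" using transitive by (simp add: ncycles_def)
  have "?n 1 \<noteq> 1" "?n 2 \<noteq> 1"
    using card_le_ncycles_if_two_transitive[of 3 h D 0 1, OF perms _ _ _ n0 _ x]
      card_le_ncycles_if_two_transitive[of 3 h D 0 2, OF perms _ _ _ n0 _ x] few big by auto
  moreover have "1 \<le> ?n 1" "1 \<le> ?n 2"
    using finite_perm_on.ncycles_pos[OF perms[of 1]] finite_perm_on.ncycles_pos[OF perms[of 2]] x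
    by (auto simp: Suc_le_eq)
  ultimately have ge2: "2 \<le> ?n 1" "2 \<le> ?n 2" by simp_all
  have "(\<Prod>i<3. ?n i) = ?n 0 * ?n 1 * ?n 2"
    by (simp add: numeral_3_eq_3 numeral_2_eq_2 lessThan_Suc ac_simps)
  then have "?n 1 * ?n 2 \<le> 4" using prod_ncycles_le[of 3 h D, OF perms] few n0 by simp
  then show ?thesis
    using mult_le_mono1[OF ge2(1), of "?n 2"] mult_le_mono2[OF ge2(2), of "?n 1"] ge2 by linarith
qed

lemma prop53_cases_three_factors:
  assumes big: "4 < card D"
  shows "prop53_cases 3 D h"
proof -
  let ?O = "\<lambda>i. orbit_of (h i) ` D"
    and ?box = "\<lambda>b c. ncycles (prod_perm 3 h) (PiE {..<3} (list_choice [D, b, c]))"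
  have "card (?O 1) = 2" "card (?O 2) = 2"
    using ncycles_eq_2_if_first_transitive[OF big] by (simp_all add: ncycles_def)
  then obtain a b c d where O1: "?O 1 = {a, b}" "a \<noteq> b" and O2: "?O 2 = {c, d}" "c \<noteq> d"
    using card_2_iff[of "?O 1"] card_2_iff[of "?O 2"] by metis
  have r: "card D = card a + card b" "card D = card c + card d"
    using finite_perm_on.card_eq_sum_card_cycles[OF perms[of 1]]
      finite_perm_on.card_eq_sum_card_cycles[OF perms[of 2]] O1 O2 by simp_all
  have "1 \<le> ?box y z" if "y \<in> ?O 1" "z \<in> ?O 2" for y z
    using ncycles_box_pos[of 3 h D, OF perms list_choice3_mem_cycle_choices[OF that]] by simp
  moreover have mem: "a \<in> ?O 1" "b \<in> ?O 1" "c \<in> ?O 2" "d \<in> ?O 2" using O1 O2 by simp_all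
  ultimately have "1 \<le> ?box a c" "1 \<le> ?box a d" "1 \<le> ?box b c" "1 \<le> ?box b d"
    by simp_all
  moreover have "?box a c + ?box a d + (?box b c + ?box b d) \<le> 4"
    using sum_ncycles_boxes3_le O1 O2 by simp
  ultimately have le1: "?box a c \<le> 1" "?box a d \<le> 1" "?box b c \<le> 1" "?box b d \<le> 1"
    by linarith+
  have "coprime (card D) (card a) \<and> coprime (card D) (card c) \<and> coprime (card a) (card c)"
    "coprime (card D) (card a) \<and> coprime (card D) (card d) \<and> coprime (card a) (card d)"
    "coprime (card D) (card b) \<and> coprime (card D) (card c) \<and> coprime (card b) (card c)"
    "coprime (card D) (card b) \<and> coprime (card D) (card d) \<and> coprime (card b) (card d)"
    using pairwise_coprime_if_ncycles_box3_le_1[OF mem(1) mem(3) le1(1)]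
      pairwise_coprime_if_ncycles_box3_le_1[OF mem(1) mem(4) le1(2)]
      pairwise_coprime_if_ncycles_box3_le_1[OF mem(2) mem(3) le1(3)]
      pairwise_coprime_if_ncycles_box3_le_1[OF mem(2) mem(4) le1(4)] by simp_all
  note coprime = this
  moreover have "coprime (card a) (card b)" "coprime (card c) (card d)"
    using coprime_if_add_eq[OF r(1)] coprime_if_add_eq[OF r(2)] coprime by simp_all
  moreover have e: "card D - card a = card b" "card D - card c = card d" using r by simp_all
  moreover have "cycle_type (h 0) D = {#card D#}" "cycle_type (h 1) D = {#card a, card b#}"
    "cycle_type (h 2) D = {#card c, card d#}"
    using transitive O1 O2 by (simp_all add: cycle_type_def)
  ultimately show ?thesis by (intro prop53_cases_iv[of h D "card a" "card c", unfolded e]) simp_all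
qed

end

lemma prop53_concl_if_ncycles_le_4:
  fixes h :: "nat \<Rightarrow> 'b \<Rightarrow> 'b" and D :: "'b set"
  assumes perms: "\<And>i. i < l \<Longrightarrow> finite_perm_on (h i) D" and big: "4 < card D" and l: "2 \<le> l"
    and few: "ncycles (prod_perm l h) (prod_set l D) \<le> 4"
  shows "prop53_concl l D h"
proof -
  let ?n = "\<lambda>i. ncycles (h i) D"
  obtain x where x: "x \<in> D" using big by fastforce
  have pos: "0 < ?n i" if "i < l" for i using finite_perm_on.ncycles_pos[OF perms[OF that]] x by blast
  have single: "i = j" if "i < l" "j < l" "?n i = 1" "?n j = 1" for i j
    using card_le_ncycles_if_two_transitive[of l h D i j, OF perms that(1,2) _ that(3,4) x] few big
    by (cases "i = j") auto
  have prod: "(\<Prod>i<l. ?n i) \<le> 4" using prod_ncycles_le[of l h D, OF perms] few by simp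
  consider "l = 2" | s where "l = 3" "s < 3" "?n s = 1"
    using cycle_counts_cases[of l ?n, OF l pos single prod] by blast
  then show ?thesis
  proof cases
    case 1
    define \<pi> :: "nat \<Rightarrow> nat" where "\<pi> = (if ?n 0 \<le> ?n 1 then id else transpose 0 1)"
    have \<pi>: "\<pi> permutes {..<l}" using 1 by (simp add: \<pi>_def permutes_swap_id)
    have "?n (\<pi> 0) \<le> ?n (\<pi> 1)" by (simp add: \<pi>_def)
    moreover have "finite_perm_on (h (\<pi> i)) D" if "i < 2" for i
      using finite_perm_on_reindex[of l h D, OF perms \<pi>] that 1 by simp
    ultimately have "prop53_cases 2 D (\<lambda>i. h (\<pi> i))"
      using prop53_cases_two_factors[of "\<lambda>i. h (\<pi> i)" D]
        ncycles_prod_perm_reindex[of l h D, OF perms \<pi>] few 1 big by simp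
    then show ?thesis using \<pi> 1 by (auto simp: prop53_concl_iff)
  next
    case (2 s)
    define \<pi> :: "nat \<Rightarrow> nat" where "\<pi> = transpose 0 s"
    have \<pi>: "\<pi> permutes {..<l}" using 2 by (simp add: \<pi>_def permutes_swap_id)
    have "orbit_of (h (\<pi> 0)) ` D = {D}"
      using finite_perm_on.cycles_if_ncycles_eq_1[OF perms] 2 by (simp add: \<pi>_def)
    moreover have "finite_perm_on (h (\<pi> i)) D" if "i < 3" for i
      using finite_perm_on_reindex[of l h D, OF perms \<pi>] that 2 by simp
    ultimately have "prop53_cases 3 D (\<lambda>i. h (\<pi> i))"
      using prop53_cases_three_factors[of "\<lambda>i. h (\<pi> i)" D]
        ncycles_prod_perm_reindex[of l h D, OF perms \<pi>] few 2 big by simp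
    then show ?thesis using \<pi> 2 by (auto simp: prop53_concl_iff)
  qed
qed

section \<open>The two families of groups\<close>

lemma finite_perm_on_SymH:
  assumes "h \<in> SymH m"
  shows "finite_perm_on h (ksubsets m k)"
proof
  obtain \<sigma> where \<sigma>: "\<sigma> permutes {1..m}" and h: "h = (\<lambda>S. \<sigma> ` S)"
    using assms unfolding SymH_def by auto
  have inj: "inj \<sigma>" using permutes_inj[OF \<sigma>] .
  show "finite (ksubsets m k)"
    unfolding ksubsets_def by (rule finite_subset[of _ "Pow {1..m}"]) auto
  show "h ` ksubsets m k \<subseteq> ksubsets m k"
    using permutes_image[OF \<sigma>] inj_on_subset[OF inj]
    by (auto simp: h ksubsets_def card_image image_mono)
  show "inj_on h (ksubsets m k)"
    using inj by (auto intro!: inj_onI simp: h inj_image_eq_iff)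
qed

lemma card_ksubsets_ge:
  assumes "1 \<le> k" "2 * k < m"
  shows "m \<le> card (ksubsets m k)"
proof -
  have "card (ksubsets m k) = m choose k"
    unfolding ksubsets_def using n_subsets[of "{1..m}" k] by simp
  moreover have "m choose 1 \<le> m choose k" using assms by (intro binomial_mono) auto
  ultimately show ?thesis by simp
qed

lemma finite_perm_on_PGammaL:
  assumes "h \<in> (PGammaL :: (('a::{field,finite} ^ 'n) set \<Rightarrow> ('a ^ 'n) set) set)"
  shows "finite_perm_on h (pg_points :: ('a ^ 'n) set set)"
proof
  obtain f :: "'a ^ 'n \<Rightarrow> 'a ^ 'n" where f: "semilinear_bij f" and h: "h = (\<lambda>P. f ` P)"
    using assms unfolding PGammaL_def by auto
  obtain \<sigma> where "bij f" and add: "\<And>x y. f (x + y) = f x + f y"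
    and "field_aut \<sigma>" and smult: "\<And>c x. f (c *s x) = \<sigma> c *s f x"
    using f unfolding semilinear_bij_def by auto
  then have inj: "inj f" and surj_\<sigma>: "surj \<sigma>"
    by (simp_all add: bij_is_inj bij_is_surj field_aut_def)
  have "f 0 = 0" using add[of 0 0] by simp
  have line_image: "f ` {c *s v | c. True} = {c *s f v | c. True}" for v
  proof
    show "f ` {c *s v | c. True} \<subseteq> {c *s f v | c. True}" using smult by auto
    show "{c *s f v | c. True} \<subseteq> f ` {c *s v | c. True}"
    proof
      fix y assume "y \<in> {c *s f v | c. True}"
      then obtain c where "y = c *s f v" by auto
      then have "y = f (inv \<sigma> c *s v)" using smult surj_\<sigma> by (simp add: surj_f_inv_f)
      then show "y \<in> f ` {c *s v | c. True}" by blast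
    qed
  qed
  show "finite (pg_points :: ('a ^ 'n) set set)" by simp
  show "h ` pg_points \<subseteq> pg_points"
  proof
    fix Q assume "Q \<in> h ` pg_points"
    then obtain v where "v \<noteq> 0" "Q = f ` {c *s v | c. True}" unfolding h pg_points_def by auto
    moreover have "f v \<noteq> 0" using \<open>v \<noteq> 0\<close> \<open>f 0 = 0\<close> inj by (metis injD)
    ultimately show "Q \<in> pg_points" unfolding pg_points_def using line_image by blast
  qed
  show "inj_on h pg_points" using inj by (auto intro!: inj_onI simp: h inj_image_eq_iff)
qed

lemma scalar_multiple_if_lines_eq:
  fixes u v :: "'a::field ^ 'n"
  assumes "{c *s u | c. True} = {c *s v | c. True}"
  shows "\<exists>c. u = c *s v"
proof -
  have "u \<in> {c *s u | c. True}" by (auto intro: exI[of _ 1])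
  then show ?thesis using assms by auto
qed

lemma card_pg_points_ge:
  assumes "2 \<le> CARD('n::finite)"
  shows "CARD('a::{field,finite}) + 1 \<le> card (pg_points :: ('a ^ 'n) set set)"
proof -
  obtain i0 i1 :: 'n where i: "i0 \<noteq> i1"
    using assms card_le_Suc0_iff_eq[of "UNIV :: 'n set"] by fastforce
  define line where "line v = {c *s v | c. True}" for v :: "'a ^ 'n"
  define e :: "'a ^ 'n" where "e = (\<chi> j. if j = i1 then 1 else 0)"
  define w :: "'a \<Rightarrow> 'a ^ 'n" where "w a = (\<chi> j. if j = i0 then 1 else if j = i1 then a else 0)" for a
  have "line v \<in> pg_points" if "v \<noteq> 0" for v unfolding pg_points_def line_def using that by blast
  moreover have "e \<noteq> 0" "w a \<noteq> 0" for a by (auto simp: e_def w_def vec_eq_iff)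
  ultimately have sub: "insert (line e) (range (\<lambda>a. line (w a))) \<subseteq> pg_points" by blast
  have "inj (\<lambda>a. line (w a))"
  proof (rule injI)
    fix a b assume "line (w a) = line (w b)"
    then obtain c where "w a = c *s w b" using scalar_multiple_if_lines_eq unfolding line_def by blast
    then have "w a $ i0 = (c *s w b) $ i0" "w a $ i1 = (c *s w b) $ i1" by simp_all
    then have "1 = c" "a = c * b" using i by (simp_all add: w_def)
    then show "a = b" by simp
  qed
  moreover have "line e \<notin> range (\<lambda>a. line (w a))"
  proof
    assume "line e \<in> range (\<lambda>a. line (w a))"
    then obtain b c where "e = c *s w b" using scalar_multiple_if_lines_eq unfolding line_def by blast
    then have "e $ i0 = (c *s w b) $ i0" "e $ i1 = (c *s w b) $ i1" by simp_all
    then have "0 = c" "1 = c * b" using i by (simp_all add: w_def e_def)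
    then show False by simp
  qed
  ultimately have "card (insert (line e) (range (\<lambda>a. line (w a)))) = CARD('a) + 1"
    by (simp add: card_image)
  then show ?thesis using card_mono[OF _ sub] by simp
qed

theorem proposition5p3:
  shows "(\<forall>(m::nat) (k::nat) (l::nat) (h :: nat \<Rightarrow> nat set \<Rightarrow> nat set).
            5 \<le> m \<and> 1 \<le> k \<and> 2 * k < m \<and> 2 \<le> l \<and> (\<forall>i<l. h i \<in> SymH m) \<and>
            ncycles (prod_perm l h) (prod_set l (ksubsets m k)) \<le> 4
            \<longrightarrow> prop53_concl l (ksubsets m k) h)
       \<and> (\<forall>(l::nat) (h :: nat \<Rightarrow> ('a::{field,finite} ^ 'n) set \<Rightarrow> ('a ^ 'n) set).
            2 \<le> CARD('n) \<and> 4 \<le> CARD('a) \<and> 2 \<le> l \<and> (\<forall>i<l. h i \<in> PGammaL) \<and>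
            ncycles (prod_perm l h) (prod_set l pg_points) \<le> 4
            \<longrightarrow> prop53_concl l (pg_points :: ('a ^ 'n) set set) h)"
proof (intro conjI allI impI; elim conjE)
  fix m k l :: nat and h :: "nat \<Rightarrow> nat set \<Rightarrow> nat set"
  assume m: "5 \<le> m" and k: "1 \<le> k" "2 * k < m" and l: "2 \<le> l" and h: "\<forall>i<l. h i \<in> SymH m"
    and few: "ncycles (prod_perm l h) (prod_set l (ksubsets m k)) \<le> 4"
  have "4 < card (ksubsets m k)" using card_ksubsets_ge[OF k] m by linarith
  with l h few show "prop53_concl l (ksubsets m k) h"
    by (intro prop53_concl_if_ncycles_le_4) (auto intro: finite_perm_on_SymH)
next
  fix l :: nat and h :: "nat \<Rightarrow> ('a::{field,finite} ^ 'n) set \<Rightarrow> ('a ^ 'n) set"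
  assume n: "2 \<le> CARD('n)" and q: "4 \<le> CARD('a)" and l: "2 \<le> l" and h: "\<forall>i<l. h i \<in> PGammaL"
    and few: "ncycles (prod_perm l h) (prod_set l pg_points) \<le> 4"
  have "4 < card (pg_points :: ('a ^ 'n) set set)" using card_pg_points_ge[where 'a = 'a, OF n] q by linarith
  with l h few show "prop53_concl l (pg_points :: ('a ^ 'n) set set) h"
    by (intro prop53_concl_if_ncycles_le_4) (auto intro: finite_perm_on_PGammaL)
qed

end
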